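(* Let $\tau>0$, let $W:\mathbb{R}^n\to\mathbb{R}$ be a continuous positive definite function, and let $V:\mathbb{R}^n\to\mathbb{R}$ be a continuous function for which there exist class-$\mathcal{K}_\infty$ functions $\kappa_1,\kappa_2$ with $\kappa_1(|x|)\le V(x)\le\kappa_2(|x|)$ for all $x\in\mathbb{R}^n$. Then there exist a function $K_c$ of class $\mathcal{K}_\infty$ and a function $K_d$, positive, continuous and increasing on $[0,+\infty)$, such that for all $x\in\mathbb{R}^n$ and all $z\ge0$, $$\frac{K_c(V(x)+z)}{K_d(V(x)+z)}\le\frac12W(x)+\frac{1}{4\tau}z.$$
   Context: $|\cdot|$ is the Euclidean norm. A class-$\mathcal{K}_\infty$ function is a continuous function $[0,\infty)\to[0,\infty)$ that is zero at zero, strictly increasing and unbounded. *)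

theory Defs
  imports "HOL-Analysis.Analysis"
begin

definition class_Kinf :: "(real \<Rightarrow> real) \<Rightarrow> bool" where
  "class_Kinf k \<longleftrightarrow> continuous_on {0..} k \<and> (\<forall>s\<ge>0. k s \<ge> 0) \<and> k 0 = 0
     \<and> strict_mono_on {0..} k \<and> (\<forall>M. \<exists>s\<ge>0. M < k s)"

definition pos_definite :: "('a::real_normed_vector \<Rightarrow> real) \<Rightarrow> bool" where
  "pos_definite W \<longleftrightarrow> W 0 = 0 \<and> (\<forall>x. x \<noteq> 0 \<longrightarrow> W x > 0)"

end

theory Submission
  imports Defs
begin

text \<open>
  Let \<open>m(s)\<close> be the infimum of \<open>W x / 2 + z / (4\<tau>)\<close> over all \<open>x\<close>, \<open>z \<ge> 0\<close> with \<open>V x + z = s\<close>.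
  Since \<open>V\<close> is radially unbounded, the sets \<open>{x. r \<le> V x \<le> r'}\<close> are compact, so \<open>W\<close> has a
  positive minimum on them when \<open>r > 0\<close>; hence \<open>m\<close> is bounded away from zero on every compact
  subinterval of \<open>(0, \<infinity>)\<close>. It then suffices to find \<open>Kc \<in> \<K>\<^sub>\<infinity>\<close> and an increasing
  \<open>Kd \<ge> 1\<close> with \<open>Kc \<le> m \<cdot> Kd\<close>. Inf-convolution of \<open>m\<close> with the 1-Lipschitz penalties
  \<open>max 0 (s - t)\<close> on \<open>(0, 1]\<close> and \<open>max 0 (t - s)\<close> on \<open>[1, \<infinity>)\<close> yields continuous minorants
  \<open>a\<close> (nondecreasing) and \<open>b\<close> (nonincreasing) of \<open>m\<close>, positive where needed, and
  \<open>Kc s = s \<cdot> a (min s 1)\<close>, \<open>Kd s = (1 + s) (1 + (1 + a 1) / b (max s 1))\<close> do the job.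
\<close>

definition inf_conv :: "(real \<Rightarrow> real) \<Rightarrow> (real \<Rightarrow> real \<Rightarrow> real) \<Rightarrow> real set \<Rightarrow> real \<Rightarrow> real"
  where "inf_conv m d T s = (INF t\<in>T. m t + d s t)"

lemma inf_conv_le:
  assumes "t \<in> T" and "\<forall>t\<in>T. 0 \<le> m t" and "\<forall>s t. 0 \<le> d s t"
  shows "inf_conv m d T s \<le> m t + d s t"
  unfolding inf_conv_def
proof (rule cInf_lower)
  show "bdd_below ((\<lambda>t. m t + d s t) ` T)"
    using assms(2,3) by (intro bdd_belowI[where m = 0]) auto
qed (use assms(1) in auto)

lemma le_inf_conv:
  assumes "T \<noteq> {}" and "\<And>t. t \<in> T \<Longrightarrow> L \<le> m t + d s t"
  shows "L \<le> inf_conv m d T s"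
  unfolding inf_conv_def using assms by (intro cInf_greatest) auto

lemma lipschitz_on_inf_conv:
  assumes "T \<noteq> {}" and "\<forall>t\<in>T. 0 \<le> m t" and "\<forall>s t. 0 \<le> d s t"
    and "\<And>s s' t. \<bar>d s t - d s' t\<bar> \<le> \<bar>s - s'\<bar>"
  shows "1-lipschitz_on UNIV (inf_conv m d T)"
proof (rule lipschitz_onI)
  fix x y :: real
  have "inf_conv m d T s - \<bar>s - s'\<bar> \<le> inf_conv m d T s'" for s s'
  proof (rule le_inf_conv[OF assms(1)])
    fix t assume "t \<in> T"
    have "inf_conv m d T s \<le> m t + d s t" by (rule inf_conv_le) fact+
    moreover have "d s t \<le> d s' t + \<bar>s - s'\<bar>" using assms(4)[of s t s'] by linarith
    ultimately show "inf_conv m d T s - \<bar>s - s'\<bar> \<le> m t + d s' t" by linarith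
  qed
  from this[of x y] this[of y x]
  show "dist (inf_conv m d T x) (inf_conv m d T y) \<le> 1 * dist x y"
    by (simp add: dist_real_def abs_le_iff abs_minus_commute)
qed simp

lemma exists_mono_minorant_on_unit_interval:
  fixes m :: "real \<Rightarrow> real"
  assumes m_nonneg: "\<And>t. t \<in> {0<..1} \<Longrightarrow> 0 \<le> m t"
    and m_pos: "\<And>r. 0 < r \<Longrightarrow> \<exists>c>0. \<forall>t\<in>{r..1}. c \<le> m t"
  shows "\<exists>a. continuous_on UNIV a \<and> mono a \<and> (\<forall>s. 0 \<le> a s) \<and> (\<forall>s>0. 0 < a s)
           \<and> (\<forall>s\<in>{0<..1}. a s \<le> m s)"
proof -
  define d where "d = (\<lambda>s t::real. max 0 (s - t))"
  define a where "a = inf_conv m d {0<..1}"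
  have T: "{0<..(1::real)} \<noteq> {}" and m0: "\<forall>t\<in>{0<..1}. 0 \<le> m t" and d0: "\<forall>s t. 0 \<le> d s t"
    using m_nonneg by (auto simp: d_def)
  note a_le = inf_conv_le[OF _ m0 d0, folded a_def]
  note le_a = le_inf_conv[OF T, of _ m d, folded a_def]
  have "continuous_on UNIV a"
    unfolding a_def by (rule lipschitz_on_continuous_on, rule lipschitz_on_inf_conv[OF T m0 d0])
      (auto simp: d_def)
  moreover have "mono a"
  proof (rule monoI, rule le_a)
    fix s s' t :: real assume "s \<le> s'" "t \<in> {0<..1}"
    then show "a s \<le> m t + d s' t" using a_le[of t s] by (auto simp: d_def)
  qed
  moreover have "0 \<le> a s" for s
    by (rule le_a) (use m0 d0 in \<open>auto intro: add_nonneg_nonneg\<close>)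
  moreover have "0 < a s" if "0 < s" for s
  proof -
    \<comment> \<open>Points \<open>t < u/2\<close> are penalized by at least \<open>s/2\<close>.\<close>
    define u where "u = min s 1"
    have u: "0 < u" "u \<le> 1" "u \<le> s" using that by (auto simp: u_def)
    obtain c where c: "c > 0" "\<forall>t\<in>{u/2..1}. c \<le> m t" using m_pos[of "u/2"] u by auto
    have "min c (s/2) \<le> a s"
    proof (rule le_a)
      fix t :: real assume t: "t \<in> {0<..1}"
      show "min c (s/2) \<le> m t + d s t"
      proof (cases "u/2 \<le> t")
        case True
        then show ?thesis using c t d0 by (smt (verit) atLeastAtMost_iff greaterThanAtMost_iff)
      next
        case False
        then have "s/2 \<le> d s t" using u by (auto simp: d_def)
        moreover have "0 \<le> m t" using m0 t by blast
        ultimately show ?thesis by linarith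
      qed
    qed
    then show ?thesis using c that by linarith
  qed
  moreover have "a s \<le> m s" if "s \<in> {0<..1}" for s
    using a_le[OF that, of s] by (simp add: d_def)
  ultimately show ?thesis by blast
qed

lemma exists_antimono_minorant_at_top:
  fixes m :: "real \<Rightarrow> real"
  assumes m_nonneg: "\<And>t. 1 \<le> t \<Longrightarrow> 0 \<le> m t"
    and m_pos: "\<And>r. \<exists>c>0. \<forall>t\<in>{1..r}. c \<le> m t"
  shows "\<exists>b. continuous_on UNIV b \<and> antimono b \<and> (\<forall>s\<ge>1. 0 < b s \<and> b s \<le> m s)"
proof -
  define d where "d = (\<lambda>s t::real. max 0 (t - s))"
  define b where "b = inf_conv m d {1..}"
  have T: "{1::real..} \<noteq> {}" and m0: "\<forall>t\<in>{1..}. 0 \<le> m t" and d0: "\<forall>s t. 0 \<le> d s t"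
    using m_nonneg by (auto simp: d_def)
  note b_le = inf_conv_le[OF _ m0 d0, folded b_def]
  note le_b = le_inf_conv[OF T, of _ m d, folded b_def]
  have "continuous_on UNIV b"
    unfolding b_def by (rule lipschitz_on_continuous_on, rule lipschitz_on_inf_conv[OF T m0 d0])
      (auto simp: d_def)
  moreover have "antimono b"
  proof (rule antimonoI, rule le_b)
    fix s s' t :: real assume "s \<le> s'" "t \<in> {1..}"
    then show "b s' \<le> m t + d s t" using b_le[of t s'] by (auto simp: d_def)
  qed
  moreover have "0 < b s" for s
  proof -
    \<comment> \<open>Points \<open>t > s + 1\<close> are penalized by at least \<open>1\<close>.\<close>
    obtain c where c: "c > 0" "\<forall>t\<in>{1..s+1}. c \<le> m t" using m_pos[of "s+1"] by auto
    have "min c 1 \<le> b s"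
    proof (rule le_b)
      fix t :: real assume t: "t \<in> {1..}"
      show "min c 1 \<le> m t + d s t"
      proof (cases "t \<le> s + 1")
        case True
        then show ?thesis using c t d0 by (smt (verit) atLeastAtMost_iff atLeast_iff)
      next
        case False
        then have "1 \<le> d s t" by (auto simp: d_def)
        moreover have "0 \<le> m t" using m0 t by blast
        ultimately show ?thesis by linarith
      qed
    qed
    then show ?thesis using c by linarith
  qed
  moreover have "b s \<le> m s" if "1 \<le> s" for s
    using b_le[of s s] that by (simp add: d_def)
  ultimately show ?thesis by blast
qed

lemma class_Kinf_times_mono:
  fixes a :: "real \<Rightarrow> real"
  assumes "continuous_on UNIV a" and "mono a" and "\<And>s. 0 \<le> a s" and "\<And>s. 0 < s \<Longrightarrow> 0 < a s"
  shows "class_Kinf (\<lambda>s. s * a (min s 1))"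
  unfolding class_Kinf_def
proof (intro conjI allI impI)
  show "continuous_on {0..} (\<lambda>s. s * a (min s 1))"
    by (intro continuous_intros continuous_on_compose2[OF assms(1)]) auto
  show "0 \<le> s * a (min s 1)" if "0 \<le> s" for s using that assms(3) by simp
  show "strict_mono_on {0..} (\<lambda>s. s * a (min s 1))"
  proof (rule strict_mono_onI)
    fix r s :: real assume rs: "r \<in> {0..}" "s \<in> {0..}" "r < s"
    have pos: "0 < a (min s 1)" using rs by (intro assms(4)) auto
    have "r * a (min r 1) \<le> r * a (min s 1)"
      using rs by (intro mult_left_mono monoD[OF assms(2)]) auto
    also have "\<dots> < s * a (min s 1)" using rs pos by simp
    finally show "r * a (min r 1) < s * a (min s 1)" .
  qed
  show "\<exists>s\<ge>0. M < s * a (min s 1)" for M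
  proof (intro exI conjI)
    define s where "s = max 1 ((\<bar>M\<bar> + 1) / a 1)"
    have a1: "0 < a 1" by (rule assms(4)) simp
    then have "\<bar>M\<bar> + 1 \<le> s * a 1" by (simp add: s_def divide_le_eq max_mult_distrib_right)
    then show "M < s * a (min s 1)" by (simp add: s_def)
    show "0 \<le> s" by (simp add: s_def)
  qed
qed simp

lemma positive_strict_mono_times_antimono:
  fixes b :: "real \<Rightarrow> real" and C :: real
  assumes "continuous_on UNIV b" and "antimono b" and "\<And>s. 1 \<le> s \<Longrightarrow> 0 < b s" and "0 \<le> C"
  defines "K \<equiv> \<lambda>s. (1 + s) * (1 + C / b (max s 1))"
  shows "\<forall>s\<ge>0. 1 \<le> K s" and "continuous_on {0..} K" and "strict_mono_on {0..} K"
proof -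
  have b_pos: "0 < b (max s 1)" for s by (rule assms(3)) simp
  have F_ge_1: "1 \<le> 1 + C / b (max s 1)" for s using b_pos[of s] assms(4) by simp
  show "\<forall>s\<ge>0. 1 \<le> K s"
  proof (intro allI impI)
    fix s :: real assume "0 \<le> s"
    then have "1 * 1 \<le> (1 + s) * (1 + C / b (max s 1))"
      using F_ge_1[of s] by (intro mult_mono) auto
    then show "1 \<le> K s" by (simp add: K_def)
  qed
  have "continuous_on {0..} (\<lambda>s. b (max s 1))"
    by (intro continuous_on_compose2[OF assms(1)] continuous_intros) auto
  then show "continuous_on {0..} K"
    unfolding K_def using b_pos by (intro continuous_intros) (auto simp: less_imp_neq[symmetric])
  show "strict_mono_on {0..} K"
  proof (rule strict_mono_onI)
    fix r s :: real assume rs: "r \<in> {0..}" "s \<in> {0..}" "r < s"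
    have "b (max s 1) \<le> b (max r 1)" using rs by (intro antimonoD[OF assms(2)]) auto
    then have "C / b (max r 1) \<le> C / b (max s 1)"
      using b_pos assms(4) by (intro divide_left_mono) auto
    then have "(1 + r) * (1 + C / b (max r 1)) \<le> (1 + r) * (1 + C / b (max s 1))"
      using rs by (intro mult_left_mono) auto
    also have "\<dots> < (1 + s) * (1 + C / b (max s 1))"
      using rs F_ge_1[of s] by (intro mult_strict_right_mono) auto
    finally show "K r < K s" by (simp add: K_def)
  qed
qed

lemma exists_Kinf_le_mult:
  fixes m :: "real \<Rightarrow> real"
  assumes m_nonneg: "\<And>t. 0 \<le> t \<Longrightarrow> 0 \<le> m t"
    and m_pos: "\<And>r r'. 0 < r \<Longrightarrow> \<exists>c>0. \<forall>t\<in>{r..r'}. c \<le> m t"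
  shows "\<exists>Kc Kd :: real \<Rightarrow> real. class_Kinf Kc \<and>
           (\<forall>s\<ge>0. Kd s > 0) \<and> continuous_on {0..} Kd \<and> strict_mono_on {0..} Kd \<and>
           (\<forall>s\<ge>0. Kc s \<le> m s * Kd s)"
proof -
  obtain a where a: "continuous_on UNIV a" "mono a" "\<And>s. 0 \<le> a s" "\<And>s. 0 < s \<Longrightarrow> 0 < a s"
      "\<And>s. s \<in> {0<..1} \<Longrightarrow> a s \<le> m s"
    using exists_mono_minorant_on_unit_interval[of m] m_nonneg m_pos by auto
  obtain b where b: "continuous_on UNIV b" "antimono b" "\<And>s. 1 \<le> s \<Longrightarrow> 0 < b s"
      "\<And>s. 1 \<le> s \<Longrightarrow> b s \<le> m s"
    using exists_antimono_minorant_at_top[of m] m_nonneg m_pos[of 1] by auto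
  define Kc where "Kc = (\<lambda>s. s * a (min s 1))"
  \<comment> \<open>For \<open>s \<ge> 1\<close> the factor \<open>(1 + a 1) / b s \<ge> a 1 / m s\<close> absorbs the linear growth of \<open>Kc\<close>.\<close>
  define Kd where "Kd s = (1 + s) * (1 + (1 + a 1) / b (max s 1))" for s
  have Kc: "class_Kinf Kc" unfolding Kc_def using a by (intro class_Kinf_times_mono)
  have "0 \<le> 1 + a 1" using a(3)[of 1] by linarith
  note Kd = positive_strict_mono_times_antimono[OF b(1-3) this, folded Kd_def]
  have Kc_le: "Kc s \<le> m s * Kd s" if s: "0 \<le> s" for s
  proof -
    consider "s = 0" | "0 < s" "s \<le> 1" | "1 < s" using s by linarith
    then show ?thesis
    proof cases
      case 1
      have "0 \<le> m 0 * Kd 0" using Kd(1) m_nonneg[of 0] by fastforce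
      then show ?thesis using 1 by (simp add: Kc_def)
    next
      case 2
      have "Kc s \<le> a s" unfolding Kc_def using 2 a(3)[of s] by (simp add: mult_left_le_one_le)
      also have "\<dots> \<le> m s" using a(5) 2 by simp
      also have "\<dots> \<le> m s * Kd s" using Kd(1) m_nonneg[OF s] s by (simp add: mult_le_cancel_left1)
      finally show ?thesis .
    next
      case 3
      have b_s: "0 < b s" "b s \<le> m s" using b(3,4) 3 by auto
      have "Kc s \<le> s * (1 + a 1)" using 3 by (simp add: Kc_def)
      also have "\<dots> = s * ((1 + a 1) / b s) * b s" using b_s by simp
      also have "\<dots> \<le> Kd s * m s"
      proof (intro mult_mono)
        show "s * ((1 + a 1) / b s) \<le> Kd s"
          unfolding Kd_def using 3 b_s a(3)[of 1] by (intro mult_mono) auto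
      qed (use 3 b_s Kd(1) s in fastforce)+
      finally show ?thesis by (simp add: mult.commute)
    qed
  qed
  have "\<forall>s\<ge>0. 0 < Kd s" using Kd(1) by (meson less_le_trans zero_less_one)
  with Kc Kc_le Kd(2,3) show ?thesis by (intro exI[of _ Kc] exI[of _ Kd]) simp
qed

lemma exists_Kinf_ratio_le:
  fixes \<phi> g :: "'a \<Rightarrow> real" and P :: "'a set"
  assumes \<phi>_nonneg: "\<And>p. p \<in> P \<Longrightarrow> 0 \<le> \<phi> p" and g_nonneg: "\<And>p. p \<in> P \<Longrightarrow> 0 \<le> g p"
    and \<phi>_onto: "\<And>s. 0 \<le> s \<Longrightarrow> \<exists>p\<in>P. \<phi> p = s"
    and g_pos: "\<And>r r'. 0 < r \<Longrightarrow> \<exists>c>0. \<forall>p\<in>P. r \<le> \<phi> p \<longrightarrow> \<phi> p \<le> r' \<longrightarrow> c \<le> g p"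
  shows "\<exists>Kc Kd :: real \<Rightarrow> real. class_Kinf Kc \<and>
           (\<forall>s\<ge>0. Kd s > 0) \<and> continuous_on {0..} Kd \<and> strict_mono_on {0..} Kd \<and>
           (\<forall>p\<in>P. Kc (\<phi> p) / Kd (\<phi> p) \<le> g p)"
proof -
  define m where "m s = (INF p\<in>{p\<in>P. \<phi> p = s}. g p)" for s
  have m_le: "m (\<phi> p) \<le> g p" if "p \<in> P" for p
    unfolding m_def using that g_nonneg by (intro cINF_lower bdd_belowI2[where m = 0]) auto
  have le_m: "L \<le> m s" if "0 \<le> s" and "\<And>p. p \<in> P \<Longrightarrow> \<phi> p = s \<Longrightarrow> L \<le> g p" for s L
    unfolding m_def using that \<phi>_onto[OF that(1)] by (intro cINF_greatest) auto
  have "0 \<le> m s" if "0 \<le> s" for s using le_m[OF that] g_nonneg by blast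
  moreover have "\<exists>c>0. \<forall>t\<in>{r..r'}. c \<le> m t" if r: "0 < r" for r r'
  proof -
    obtain c where "c > 0" "\<forall>p\<in>P. r \<le> \<phi> p \<longrightarrow> \<phi> p \<le> r' \<longrightarrow> c \<le> g p"
      using g_pos[OF r] by blast
    then show ?thesis using r by (intro exI[of _ c]) (auto intro!: le_m)
  qed
  ultimately obtain Kc Kd where K: "class_Kinf Kc" "\<forall>s\<ge>0. Kd s > 0" "continuous_on {0..} Kd"
      "strict_mono_on {0..} Kd" "\<forall>s\<ge>0. Kc s \<le> m s * Kd s"
    using exists_Kinf_le_mult[of m] by blast
  have "Kc (\<phi> p) / Kd (\<phi> p) \<le> g p" if "p \<in> P" for p
  proof -
    have "Kc (\<phi> p) / Kd (\<phi> p) \<le> m (\<phi> p)"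
      using K(2,5) \<phi>_nonneg[OF that] by (simp add: divide_le_eq)
    then show ?thesis using m_le[OF that] by linarith
  qed
  with K show ?thesis by blast
qed

lemma pos_definite_bounded_below_on_level_band:
  fixes V W :: "'a::{real_normed_vector, heine_borel} \<Rightarrow> real"
  assumes "continuous_on UNIV W" and "pos_definite W" and "continuous_on UNIV V"
    and "class_Kinf \<kappa>" and "\<And>x. \<kappa> (norm x) \<le> V x" and "V 0 = 0" and "0 < r"
  shows "\<exists>c>0. \<forall>x. r \<le> V x \<longrightarrow> V x \<le> r' \<longrightarrow> c \<le> W x"
proof -
  define S where "S = {x. r \<le> V x} \<inter> {x. V x \<le> r'}"
  have "closed S" unfolding S_def using assms(3)
    by (intro closed_Int closed_Collect_le continuous_intros) auto
  obtain R where R: "0 \<le> R" "r' < \<kappa> R" using assms(4) unfolding class_Kinf_def by blast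
  have "norm x \<le> R" if "x \<in> S" for x
  proof (rule ccontr)
    assume "\<not> norm x \<le> R"
    then have "\<kappa> R < \<kappa> (norm x)" using assms(4) R unfolding class_Kinf_def
      by (intro strict_mono_onD[of "{0..}" \<kappa>]) auto
    then show False using assms(5)[of x] R that unfolding S_def by auto
  qed
  then have "bounded S" by (intro boundedI)
  with \<open>closed S\<close> have "compact S" by (simp add: compact_eq_bounded_closed)
  show ?thesis
  proof (cases "S = {}")
    case True
    then show ?thesis by (intro exI[of _ 1]) (auto simp: S_def)
  next
    case False
    obtain x0 where x0: "x0 \<in> S" "\<forall>y\<in>S. W x0 \<le> W y"
      using continuous_attains_inf[OF \<open>compact S\<close> False continuous_on_subset[OF assms(1)]] by auto
    have "x0 \<noteq> 0" using x0(1) assms(6,7) unfolding S_def by auto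
    then have "0 < W x0" using assms(2) unfolding pos_definite_def by blast
    with x0 show ?thesis by (intro exI[of _ "W x0"]) (auto simp: S_def)
  qed
qed

lemma weighted_sum_bounded_below_on_level_band:
  fixes V W :: "'a \<Rightarrow> real"
  assumes "0 < \<tau>" and "0 < r" and W_nonneg: "\<And>x. 0 \<le> W x"
    and "\<exists>c>0. \<forall>x. r/2 \<le> V x \<longrightarrow> V x \<le> r' \<longrightarrow> c \<le> W x"
  shows "\<exists>c>0. \<forall>x z. 0 \<le> z \<longrightarrow> r \<le> V x + z \<longrightarrow> V x + z \<le> r' \<longrightarrow> c \<le> W x / 2 + z / (4 * \<tau>)"
proof -
  obtain c where c: "0 < c" "\<And>x. r/2 \<le> V x \<Longrightarrow> V x \<le> r' \<Longrightarrow> c \<le> W x"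
    using assms(4) by blast
  have "min (c/2) (r / (8 * \<tau>)) \<le> W x / 2 + z / (4 * \<tau>)"
    if z: "0 \<le> z" and band: "r \<le> V x + z" "V x + z \<le> r'" for x z
  proof (cases "r/2 \<le> z")
    case True
    then have "r / (8 * \<tau>) \<le> z / (4 * \<tau>)" using assms(1) by (simp add: field_simps)
    then show ?thesis using W_nonneg[of x] by linarith
  next
    case False
    then have "c \<le> W x" using c(2) z band by simp
    moreover have "0 \<le> z / (4 * \<tau>)" using z assms(1) by simp
    ultimately show ?thesis by linarith
  qed
  moreover have "0 < min (c/2) (r / (8 * \<tau>))" using c(1) assms(1,2) by simp
  ultimately show ?thesis by blast
qed

theorem lemma2:
  fixes \<tau> :: real and W V :: "real ^ 'n \<Rightarrow> real" and \<kappa>1 \<kappa>2 :: "real \<Rightarrow> real"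
  assumes "\<tau> > 0"
    and "continuous_on UNIV W" and "pos_definite W"
    and "continuous_on UNIV V"
    and "class_Kinf \<kappa>1" and "class_Kinf \<kappa>2"
    and "\<And>x. \<kappa>1 (norm x) \<le> V x \<and> V x \<le> \<kappa>2 (norm x)"
  shows "\<exists>Kc Kd :: real \<Rightarrow> real.
           class_Kinf Kc \<and>
           (\<forall>s\<ge>0. Kd s > 0) \<and> continuous_on {0..} Kd \<and> strict_mono_on {0..} Kd \<and>
           (\<forall>x. \<forall>z\<ge>0. Kc (V x + z) / Kd (V x + z) \<le> W x / 2 + z / (4 * \<tau>))"
proof -
  have W_nonneg: "0 \<le> W x" for x
    using assms(3) unfolding pos_definite_def by (metis order.refl less_imp_le)
  have V_nonneg: "0 \<le> V x" for x
    using assms(5) assms(7)[of x] unfolding class_Kinf_def by (metis norm_ge_zero order_trans)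
  have V_0: "V 0 = 0" using assms(6) assms(7)[of 0] V_nonneg[of 0] unfolding class_Kinf_def by simp
  have "\<exists>c>0. \<forall>x z. 0 \<le> z \<longrightarrow> r \<le> V x + z \<longrightarrow> V x + z \<le> r' \<longrightarrow> c \<le> W x / 2 + z / (4 * \<tau>)"
    if "0 < r" for r r'
    using that assms(1) W_nonneg
    by (intro weighted_sum_bounded_below_on_level_band pos_definite_bounded_below_on_level_band
        [OF assms(2-5) _ V_0]) (auto simp: assms(7))
  moreover have "\<exists>x z. 0 \<le> z \<and> V x + z = s" if "0 \<le> s" for s
    using V_0 that by (intro exI[of _ 0] exI[of _ s]) simp
  ultimately show ?thesis
    using exists_Kinf_ratio_le[of "{(x, z). 0 \<le> z}" "\<lambda>(x, z). V x + z" "\<lambda>(x, z). W x / 2 + z / (4 * \<tau>)"]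
      V_nonneg W_nonneg assms(1) by (auto simp: split_beta)
qed

end
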